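(* Let $d\ge 1$ and $f\in C^1([0,1]^d)$, and set $\mu=\int_{[0,1]^d}f(X)\,\mathrm{d}X$ and $$\sigma^2=\frac{1}{12}\int_{[0,1]^{d}}\Vert\nabla f(X)\Vert^{2}\,\mathrm{d} X.$$ Suppose $\sigma^2>0$. For an integer $m\ge 1$ let $n=m^d$, and let $\tilde{\mu}_n$ be the grid-based stratified estimate defined below. Then $$\frac{\tilde{\mu}_n-\mu}{\sigma n^{-1/2-1/d}}\to N(0,1)$$ in distribution as $n=m^d\to\infty$.
   Context: For an integer $m\ge 1$ and $n=m^d$, split $[0,1]^d$ into the $n$ congruent closed subcubes $E_1,\dots,E_n$ with sides of length $1/m$. The grid-based stratified estimate is $\tilde{\mu}_n=\frac1n\sum_{i=1}^n f(U_i)$, where $U_1,\dots,U_n$ are independent and $U_i$ is uniformly distributed on $E_i$. Here $\nabla f$ is the gradient of $f$ and $\Vert\cdot\Vert$ is the Euclidean norm. *)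

theory Defs
  imports "HOL-Probability.Probability"
begin

definition unit_cube :: "(real ^ 'n) set" where
  "unit_cube = cbox 0 1"

definition grid_index :: "nat \<Rightarrow> ('n::finite \<Rightarrow> nat) set" where
  "grid_index m = PiE UNIV (\<lambda>_. {..<m})"

definition grid_cell :: "nat \<Rightarrow> ('n::finite \<Rightarrow> nat) \<Rightarrow> (real ^ 'n) set" where
  "grid_cell m k = cbox (\<chi> i. real (k i) / real m) (\<chi> i. (real (k i) + 1) / real m)"

text \<open>f is only relevant on the unit cube; outside we set it to 0 (the sample points lie in the
  cube almost surely, so this does not change the estimator's law).\<close>
definition on_cube :: "(real ^ 'n \<Rightarrow> real) \<Rightarrow> real ^ 'n \<Rightarrow> real" where
  "on_cube f x = (if x \<in> unit_cube then f x else 0)"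

definition strat_sample :: "nat \<Rightarrow> (('n::finite \<Rightarrow> nat) \<Rightarrow> real ^ 'n) measure" where
  "strat_sample m = PiM (grid_index m) (\<lambda>k. uniform_measure lborel (grid_cell m k))"

definition strat_estimate ::
  "(real ^ 'n::finite \<Rightarrow> real) \<Rightarrow> nat \<Rightarrow> (('n \<Rightarrow> nat) \<Rightarrow> real ^ 'n) \<Rightarrow> real" where
  "strat_estimate f m U = (1 / real (m ^ CARD('n))) * (\<Sum>k\<in>grid_index m. on_cube f (U k))"

end

theory Submission
  imports Defs
begin

(* Given the strata, the estimate is an average of n = m^d independent terms f(U_k), with U_k
   uniform on the cell E_k of side 1/m and centre c_k. On E_k, f agrees with its tangent plane at
   c_k up to o(1/m), and the uniform distribution on a box of side 1/m has covariance
   (1/(12 m^2)) I; so Var f(U_k) = |grad f(c_k)|^2 / (12 m^2) + o(m^-2), and a Riemann sum of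
   |grad f|^2 shows that the normalised estimate has variance tending to 1. Each normalised
   summand is bounded by O(n^(-1/2)), so a second-order expansion of characteristic functions puts
   the characteristic function of the sum within n * O(n^(-3/2)) of exp (-t^2 Var / 2), and
   Levy's continuity theorem concludes. *)

section \<open>Grid cells\<close>

definition cell_center :: "nat \<Rightarrow> ('n::finite \<Rightarrow> nat) \<Rightarrow> real ^ 'n" where
  "cell_center m k = (\<chi> i. (real (k i) + 1/2) / real m)"

lemma mem_grid_cell:
  "x \<in> grid_cell m k \<longleftrightarrow> (\<forall>i. real (k i) / real m \<le> x$i \<and> x$i \<le> (real (k i) + 1) / real m)"
  unfolding grid_cell_def mem_box_cart by simp

lemma mem_unit_cube: "x \<in> unit_cube \<longleftrightarrow> (\<forall>i. 0 \<le> x$i \<and> x$i \<le> 1)"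
  unfolding unit_cube_def mem_box_cart by simp

lemma compact_unit_cube: "compact unit_cube"
  unfolding unit_cube_def by simp

lemma convex_unit_cube: "convex unit_cube"
  unfolding unit_cube_def by simp

lemma mem_grid_index: "k \<in> grid_index m \<longleftrightarrow> (\<forall>i. k i < m)"
  unfolding grid_index_def by (auto simp: PiE_iff extensional_def)

lemma mem_grid_index_imp_pos:
  assumes "k \<in> grid_index m"
  shows "m > 0"
proof -
  have "k undefined < m"
    using assms by (simp add: mem_grid_index)
  then show ?thesis
    by simp
qed

lemma finite_grid_index: "finite (grid_index m)"
  unfolding grid_index_def by (intro finite_PiE) auto

lemma card_grid_index: "card (grid_index m :: ('n::finite \<Rightarrow> nat) set) = m ^ CARD('n)"
  unfolding grid_index_def by (simp add: card_PiE)

lemma grid_cell_subset_unit_cube: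
  assumes "k \<in> grid_index m"
  shows "grid_cell m k \<subseteq> unit_cube"
proof
  fix x assume x: "x \<in> grid_cell m k"
  have "k i + 1 \<le> m" for i
    using assms by (auto simp: mem_grid_index Suc_le_eq)
  then have "real (k i) + 1 \<le> real m" for i
    by (metis of_nat_1 of_nat_add of_nat_le_iff)
  then have "(real (k i) + 1) / real m \<le> 1" for i
    by (metis divide_le_eq_1 less_eq_real_def of_nat_0 of_nat_le_iff zero_le)
  with x show "x \<in> unit_cube"
    unfolding mem_unit_cube mem_grid_cell by (meson dual_order.trans of_nat_0_le_iff divide_nonneg_nonneg)
qed

lemma cell_center_eq_midpoint:
  "cell_center m k = midpoint (\<chi> i. real (k i) / real m) (\<chi> i. (real (k i) + 1) / real m)"
  unfolding cell_center_def midpoint_def by (simp add: vec_eq_iff field_split_simps)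

lemma cell_center_in_grid_cell:
  assumes "m > 0"
  shows "cell_center m k \<in> grid_cell m k"
  using assms unfolding mem_grid_cell cell_center_def by (auto simp: divide_right_mono)

lemma grid_cell_dist:
  fixes k :: "'n::finite \<Rightarrow> nat"
  assumes "m > 0" "x \<in> grid_cell m k" "y \<in> grid_cell m k"
  shows "norm (x - y) \<le> real CARD('n) / real m"
proof -
  have "\<bar>x$i - y$i\<bar> \<le> 1 / real m" for i
    using assms(2,3)[unfolded mem_grid_cell, THEN spec[of _ i]] assms(1)
    by (simp add: abs_le_iff field_simps)
  then have "(\<Sum>i\<in>UNIV. \<bar>(x - y)$i\<bar>) \<le> (\<Sum>i\<in>(UNIV::'n set). 1 / real m)"
    by (intro sum_mono) simp
  then show ?thesis
    using norm_le_l1_cart[of "x - y"] by simp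
qed

lemma grid_cell_dist_center:
  fixes k :: "'n::finite \<Rightarrow> nat"
  assumes "m > 0" "x \<in> grid_cell m k"
  shows "norm (x - cell_center m k) \<le> real CARD('n) / real m"
  using grid_cell_dist[OF assms cell_center_in_grid_cell[OF assms(1)]] .

lemma eventually_grid_cell_dist_less:
  assumes "\<delta> > 0"
  shows "\<forall>\<^sub>F m in sequentially. m > 0 \<and>
           (\<forall>(k :: 'n::finite \<Rightarrow> nat) x y.
              x \<in> grid_cell m k \<longrightarrow> y \<in> grid_cell m k \<longrightarrow> dist x y < \<delta>)"
proof -
  obtain M :: nat where M: "real CARD('n) / \<delta> < real M"
    using reals_Archimedean2 by blast
  have "m > 0 \<and> (\<forall>(k :: 'n \<Rightarrow> nat) x y.
                     x \<in> grid_cell m k \<longrightarrow> y \<in> grid_cell m k \<longrightarrow> dist x y < \<delta>)"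
    if "m \<ge> M" for m :: nat
  proof -
    have "real CARD('n) / \<delta> < real m"
      using M that by linarith
    moreover have "0 < real CARD('n) / \<delta>"
      using assms by simp
    ultimately have "m > 0"
      by linarith
    moreover from this have small: "real CARD('n) / real m < \<delta>"
      using \<open>real CARD('n) / \<delta> < real m\<close> assms by (simp add: field_simps)
    moreover have "dist x y < \<delta>" if "x \<in> grid_cell m k" "y \<in> grid_cell m k"
      for x y and k :: "'n \<Rightarrow> nat"
      using grid_cell_dist[OF \<open>m > 0\<close> that] small by (simp add: dist_norm)
    ultimately show ?thesis
      by blast
  qed
  then show ?thesis
    by (auto simp: eventually_sequentially)
qed

lemma Union_grid_cells:
  assumes "m > 0"
  shows "(\<Union>k\<in>grid_index m. grid_cell m k) = (unit_cube :: (real^'n::finite) set)"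
proof
  show "(\<Union>k\<in>grid_index m. grid_cell m k) \<subseteq> (unit_cube :: (real^'n) set)"
    using grid_cell_subset_unit_cube by blast
next
  show "unit_cube \<subseteq> (\<Union>k\<in>grid_index m. grid_cell m k :: (real^'n) set)"
  proof
    fix x :: "real^'n" assume x: "x \<in> unit_cube"
    \<comment> \<open>The cell index of a point is the integer part of m x, except on the upper faces.\<close>
    define k where "k i = min (m - 1) (nat \<lfloor>real m * x$i\<rfloor>)" for i
    have "k \<in> grid_index m"
      unfolding mem_grid_index k_def using assms by auto
    moreover have "real (k i) \<le> real m * x$i \<and> real m * x$i \<le> real (k i) + 1" for i
    proof -
      have "0 \<le> x$i" "x$i \<le> 1"
        using x mem_unit_cube by blast+
      then have "0 \<le> real m * x$i" "real m * x$i \<le> real m"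
        by (simp_all add: mult_left_le)
      then show ?thesis
        using assms unfolding k_def by (cases "nat \<lfloor>real m * x$i\<rfloor> \<le> m - 1") (auto, linarith+)
    qed
    then have "x \<in> grid_cell m k"
      unfolding mem_grid_cell using assms by (simp add: field_simps)
    ultimately show "x \<in> (\<Union>k\<in>grid_index m. grid_cell m k)"
      by blast
  qed
qed

lemma negligible_cart_hyperplane: "negligible {x::real^'n::finite. x$i = c}"
proof -
  have "negligible {x::real^'n. x \<bullet> axis i 1 = c}"
    by (rule negligible_standard_hyperplane) simp
  then show ?thesis
    by (simp add: cart_eq_inner_axis)
qed

lemma negligible_grid_cell_Int:
  assumes "m > 0" "k \<noteq> k'"
  shows "negligible (grid_cell m k \<inter> grid_cell m k')"
proof -
  obtain i where i: "k i \<noteq> k' i"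
    using assms(2) by blast
  have "grid_cell m k \<inter> grid_cell m k' \<subseteq> {x. x$i = real (max (k i) (k' i)) / real m}"
  proof
    fix x assume "x \<in> grid_cell m k \<inter> grid_cell m k'"
    then have "real (k i) \<le> real m * x$i" "real m * x$i \<le> real (k i) + 1"
      "real (k' i) \<le> real m * x$i" "real m * x$i \<le> real (k' i) + 1"
      using assms(1) by (auto simp: mem_grid_cell field_simps)
    moreover have "real (k i) + 1 \<le> real (k' i) \<or> real (k' i) + 1 \<le> real (k i)"
      using i by linarith
    ultimately have "real m * x$i = real (max (k i) (k' i))"
      by (auto simp: max_def)
    then show "x \<in> {x. x$i = real (max (k i) (k' i)) / real m}"
      using assms(1) by (simp add: field_simps)
  qed
  then show ?thesis
    by (rule negligible_subset[OF negligible_cart_hyperplane])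
qed

lemma measure_grid_cell:
  assumes "m > 0"
  shows "measure lborel (grid_cell m (k::'n::finite \<Rightarrow> nat)) = 1 / real m ^ CARD('n)"
proof -
  have "grid_cell m k \<noteq> {}"
    using cell_center_in_grid_cell[OF assms] by blast
  then have "measure lborel (grid_cell m k) = (\<Prod>i\<in>(UNIV::'n set). 1 / real m)"
    unfolding grid_cell_def by (simp add: content_cbox_cart add_divide_distrib)
  then show ?thesis
    by (simp add: power_one_over)
qed

lemma powr_neg_half_minus_inverse_card:
  assumes m: "m > 0" and d: "d > 0"
  shows "real (m ^ d) powr (- 1/2 - 1 / real d) = sqrt (real m ^ d) / (real m * real m ^ d)"
proof -
  have m': "real m > 0"
    using m by simp
  have exponent: "real d * (- 1/2 - 1 / real d) = - (real d / 2) - 1"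
    using d by (simp add: field_simps)
  have "real (m ^ d) powr (- 1/2 - 1 / real d) = (real m powr real d) powr (- 1/2 - 1 / real d)"
    using m' by (simp only: of_nat_power powr_realpow)
  also have "\<dots> = real m powr (- (real d / 2) - 1)"
    by (simp only: powr_powr exponent)
  also have "\<dots> = real m powr (- (real d / 2)) / real m powr 1"
    by (rule powr_diff)
  also have "\<dots> = 1 / (real m powr (real d / 2) * real m)"
    using m' by (simp only: powr_minus powr_one less_imp_le inverse_eq_divide divide_divide_eq_left)
  also have "real m powr (real d / 2) = sqrt (real m ^ d)"
  proof -
    have "sqrt (real m ^ d) = sqrt (real m powr real d)"
      using m' by (simp add: powr_realpow)
    also have "\<dots> = (real m powr real d) powr (1/2)"
      by (simp add: powr_half_sqrt)
    also have "\<dots> = real m powr (real d / 2)"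
      by (simp add: powr_powr)
    finally show ?thesis ..
  qed
  also have "1 / (sqrt (real m ^ d) * real m) = sqrt (real m ^ d) / real m ^ d / real m"
    using m' by (simp add: sqrt_divide_self_eq inverse_eq_divide)
  finally show ?thesis
    by simp
qed

section \<open>The uniform distribution on a box\<close>

lemma midpoint_component: "midpoint (a::real^'n) b $ i = (a$i + b$i) / 2"
  by (simp add: midpoint_def)

lemma integral_uniform_measure_lborel:
  fixes A :: "'a::euclidean_space set"
  assumes A: "A \<in> sets borel" and v: "emeasure lborel A = ennreal v" "0 < v"
    and [measurable]: "\<phi> \<in> borel_measurable borel"
  shows "integral\<^sup>L (uniform_measure lborel A) \<phi> = (LINT x|lborel. indicator A x * \<phi> x) / v"
proof -
  have "(\<lambda>x. indicator A x / emeasure lborel A) = (\<lambda>x. ennreal (indicator A x / v))"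
    using v by (auto simp: indicator_def fun_eq_iff intro: divide_ennreal[of 1 v, simplified])
  then have "uniform_measure lborel A = density lborel (\<lambda>x. ennreal (indicator A x / v))"
    unfolding uniform_measure_def by simp
  then show ?thesis
    using A v by (simp add: integral_density)
qed

lemma borel_measurable_uniform_measure:
  "borel_measurable (uniform_measure lborel A) = borel_measurable (borel :: 'a::euclidean_space measure)"
  by (rule measurable_cong_sets) simp_all

lemma integral_lborel_prod:
  fixes f :: "'a::euclidean_space \<Rightarrow> real \<Rightarrow> real"
  assumes [measurable]: "\<And>b. b \<in> Basis \<Longrightarrow> f b \<in> borel_measurable borel"
    and int: "\<And>b. b \<in> Basis \<Longrightarrow> integrable lborel (f b)"
  shows "(LINT x|lborel. (\<Prod>b\<in>Basis. f b (x \<bullet> b))) = (\<Prod>b\<in>Basis. LINT x|lborel. f b x)"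
proof -
  interpret product_sigma_finite "\<lambda>_::'a. lborel::real measure"
    by standard
  have coord: "(\<Sum>b'\<in>Basis. y b' *\<^sub>R b') \<bullet> b = y b" if "b \<in> Basis" for y :: "'a \<Rightarrow> real" and b
    using that by (simp add: inner_sum_left inner_Basis if_distrib sum.delta cong: if_cong)
  have "(LINT x|lborel. (\<Prod>b\<in>Basis. f b (x \<bullet> b))) =
      (LINT y|Pi\<^sub>M Basis (\<lambda>_. lborel). (\<Prod>b\<in>Basis. f b ((\<Sum>b'\<in>Basis. y b' *\<^sub>R b') \<bullet> b)))"
    by (subst lborel_eq) (subst integral_distr; simp)
  also have "\<dots> = (LINT y|Pi\<^sub>M Basis (\<lambda>_. lborel). (\<Prod>b\<in>Basis. f b (y b)))"
    by (simp add: coord cong: prod.cong)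
  also have "\<dots> = (\<Prod>b\<in>Basis. LINT x|lborel. f b x)"
    by (rule product_integral_prod) (auto intro: int)
  finally show ?thesis .
qed

lemma integral_cart_box_prod:
  fixes G :: "'n::finite \<Rightarrow> real \<Rightarrow> real" and lo hi :: "real^'n"
  assumes cont: "\<And>i. continuous_on UNIV (G i)"
  shows "(LINT x|lborel. indicator (cbox lo hi) x * (\<Prod>i\<in>UNIV. G i (x$i))) =
         (\<Prod>i\<in>UNIV. LINT t|lborel. G i t * indicator {lo$i..hi$i} t)"
proof -
  have inj_axis: "inj (\<lambda>i::'n. axis i (1::real))"
    by (auto intro!: injI simp: axis_eq_axis)
  have Basis_cart: "(Basis :: (real^'n) set) = range (\<lambda>i. axis i 1)"
    by (auto simp: Basis_vec_def)
  define index where "index = inv (\<lambda>i::'n. axis i (1::real))"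
  have index_axis [simp]: "index (axis i 1) = i" for i
    unfolding index_def by (rule inv_f_f[OF inj_axis])
  define F where "F b t = G (index b) t * indicator {lo \<bullet> b..hi \<bullet> b} t" for b :: "real^'n" and t
  have [measurable]: "G i \<in> borel_measurable borel" for i
    using cont by (rule borel_measurable_continuous_onI)
  have F_meas: "F b \<in> borel_measurable borel" for b
    unfolding F_def by measurable
  have F_int: "integrable lborel (F b)" for b
    unfolding F_def using cont
    by (intro borel_integrable_atLeastAtMost) (metis continuous_on_eq_continuous_at open_UNIV UNIV_I)
  have prod_Basis: "(\<Prod>b\<in>Basis. h b) = (\<Prod>i\<in>UNIV. h (axis i 1))" for h :: "real^'n \<Rightarrow> real"
    unfolding Basis_cart by (subst prod.reindex[OF inj_axis]) simp
  have indicator_cbox: "indicator (cbox lo hi) x = (\<Prod>i\<in>UNIV. indicator {lo$i..hi$i} (x$i) :: real)"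
    for x :: "real^'n"
    by (auto simp: indicator_def mem_box_cart prod_zero)
  have "(\<lambda>x. indicator (cbox lo hi) x * (\<Prod>i\<in>UNIV. G i (x$i))) = (\<lambda>x. \<Prod>b\<in>Basis. F b (x \<bullet> b))"
    by (simp add: prod_Basis F_def cart_eq_inner_axis indicator_cbox prod.distrib mult.commute)
  then have "(LINT x|lborel. indicator (cbox lo hi) x * (\<Prod>i\<in>UNIV. G i (x$i))) =
      (\<Prod>b\<in>Basis. LINT t|lborel. F b t)"
    using integral_lborel_prod[of F, OF F_meas F_int] by simp
  also have "\<dots> = (\<Prod>i\<in>UNIV. LINT t|lborel. G i t * indicator {lo$i..hi$i} t)"
    by (simp add: prod_Basis F_def cart_eq_inner_axis)
  finally show ?thesis .
qed

lemma emeasure_cbox_cart: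
  fixes lo hi :: "real^'n::finite"
  assumes "\<And>i. lo$i \<le> hi$i"
  shows "emeasure lborel (cbox lo hi) = ennreal (\<Prod>i\<in>UNIV. hi$i - lo$i)"
proof -
  have "lo \<in> cbox lo hi"
    using assms by (simp add: mem_box_cart)
  then have "cbox lo hi \<noteq> {}"
    by blast
  then show ?thesis
    using emeasure_lborel_cbox_finite[of lo hi]
    by (simp add: emeasure_eq_ennreal_measure content_cbox_cart)
qed

lemma prob_space_uniform_box:
  fixes lo hi :: "real^'n::finite"
  assumes "\<And>i. lo$i < hi$i"
  shows "prob_space (uniform_measure lborel (cbox lo hi))"
proof (rule prob_space_uniform_measure)
  have "0 < (\<Prod>i\<in>UNIV. hi$i - lo$i)"
    using assms by (simp add: prod_pos)
  then show "emeasure lborel (cbox lo hi) \<noteq> 0" "emeasure lborel (cbox lo hi) \<noteq> \<infinity>"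
    unfolding emeasure_cbox_cart[OF less_imp_le[OF assms]] by (simp_all only: ennreal_eq_0_iff not_le) simp
qed

lemma AE_uniform_box:
  "AE x in uniform_measure lborel (cbox lo hi). x \<in> cbox lo (hi::real^'n::finite)"
  by (rule AE_uniform_measureI) auto

lemma integrable_uniform_box:
  fixes lo hi :: "real^'n::finite" and \<phi> :: "real^'n \<Rightarrow> real"
  assumes "\<And>i. lo$i < hi$i" "\<phi> \<in> borel_measurable borel" "continuous_on (cbox lo hi) \<phi>"
  shows "integrable (uniform_measure lborel (cbox lo hi)) \<phi>"
proof -
  interpret prob_space "uniform_measure lborel (cbox lo hi)"
    using assms(1) by (rule prob_space_uniform_box)
  have "bounded (\<phi> ` cbox lo hi)"
    using assms(3) by (intro compact_imp_bounded compact_continuous_image) simp_all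
  then obtain B where B: "\<forall>x\<in>cbox lo hi. norm (\<phi> x) \<le> B"
    unfolding bounded_iff by blast
  have "AE x in uniform_measure lborel (cbox lo hi). norm (\<phi> x) \<le> B"
    using AE_uniform_box by eventually_elim (use B in blast)
  with assms(2) show ?thesis
    by (intro integrable_const_bound) auto
qed

lemma integral_uniform_box_prod:
  fixes G :: "'n::finite \<Rightarrow> real \<Rightarrow> real" and lo hi :: "real^'n"
  assumes lohi: "\<And>i. lo$i < hi$i" and cont: "\<And>i. continuous_on UNIV (G i)"
  shows "(\<integral>x. (\<Prod>i\<in>UNIV. G i (x$i)) \<partial>uniform_measure lborel (cbox lo hi)) =
         (\<Prod>i\<in>UNIV. (LINT t|lborel. G i t * indicator {lo$i..hi$i} t) / (hi$i - lo$i))"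
proof -
  have [measurable]: "G i \<in> borel_measurable borel" for i
    using cont by (rule borel_measurable_continuous_onI)
  have "(\<integral>x. (\<Prod>i\<in>UNIV. G i (x$i)) \<partial>uniform_measure lborel (cbox lo hi)) =
      (LINT x|lborel. indicator (cbox lo hi) x * (\<Prod>i\<in>UNIV. G i (x$i))) / (\<Prod>i\<in>UNIV. hi$i - lo$i)"
    using lohi emeasure_cbox_cart[OF less_imp_le[OF lohi]]
    by (intro integral_uniform_measure_lborel) (simp_all add: prod_pos)
  then show ?thesis
    by (simp add: integral_cart_box_prod[OF cont] prod_dividef)
qed

lemma lborel_integral_Icc_centered:
  fixes a b :: real
  assumes "a \<le> b"
  shows "(LINT t|lborel. (t - (a + b) / 2) * indicator {a..b} t) = 0"
proof -
  have "(LINT t|lborel. indicator {a..b} t *\<^sub>R (t - (a + b) / 2)) =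
      (b - (a + b) / 2)\<^sup>2 / 2 - (a - (a + b) / 2)\<^sup>2 / 2"
    by (rule integral_FTC_atLeastAtMost[where F="\<lambda>t. (t - (a + b) / 2)\<^sup>2 / 2"])
      (auto simp flip: has_real_derivative_iff_has_vector_derivative
        intro!: derivative_eq_intros assms continuous_intros)
  then show ?thesis
    by (simp add: mult.commute field_simps power2_eq_square)
qed

lemma lborel_integral_Icc_centered_square:
  fixes a b :: real
  assumes "a \<le> b"
  shows "(LINT t|lborel. ((t - (a + b) / 2) * (t - (a + b) / 2)) * indicator {a..b} t) = (b - a) ^ 3 / 12"
proof -
  have "(LINT t|lborel. indicator {a..b} t *\<^sub>R ((t - (a + b) / 2) * (t - (a + b) / 2))) =
      (b - (a + b) / 2) ^ 3 / 3 - (a - (a + b) / 2) ^ 3 / 3"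
    by (rule integral_FTC_atLeastAtMost[where F="\<lambda>t. (t - (a + b) / 2) ^ 3 / 3"])
      (auto simp flip: has_real_derivative_iff_has_vector_derivative
        intro!: derivative_eq_intros assms continuous_intros simp: power2_eq_square)
  then show ?thesis
    by (simp add: mult.commute field_simps power3_eq_cube)
qed

lemma uniform_box_coordinate_mean:
  fixes lo hi :: "real^'n::finite"
  assumes lohi: "\<And>i. lo$i < hi$i"
  shows "(\<integral>x. x$i - midpoint lo hi $ i \<partial>uniform_measure lborel (cbox lo hi)) = 0"
proof -
  define G where "G l t = (if l = i then t - midpoint lo hi $ i else 1)" for l t
  have cont: "continuous_on UNIV (G l)" for l
    unfolding G_def by (cases "l = i") (auto intro!: continuous_intros)
  have "(\<integral>x. x$i - midpoint lo hi $ i \<partial>uniform_measure lborel (cbox lo hi)) =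
      (\<integral>x. (\<Prod>l\<in>UNIV. G l (x$l)) \<partial>uniform_measure lborel (cbox lo hi))"
    by (simp add: G_def)
  also have "\<dots> = (\<Prod>l\<in>UNIV. (LINT t|lborel. G l t * indicator {lo$l..hi$l} t) / (hi$l - lo$l))"
    by (rule integral_uniform_box_prod[OF lohi cont])
  also have "\<dots> = 0"
    using lborel_integral_Icc_centered[OF less_imp_le[OF lohi[of i]]]
    by (intro prod_zero bexI[of _ i]) (simp_all add: G_def midpoint_component)
  finally show ?thesis .
qed

lemma uniform_box_coordinate_covariance:
  fixes lo hi :: "real^'n::finite"
  assumes lohi: "\<And>i. lo$i < hi$i"
  shows "(\<integral>x. (x$i - midpoint lo hi $ i) * (x$j - midpoint lo hi $ j) \<partial>uniform_measure lborel (cbox lo hi)) =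
         (if i = j then (hi$i - lo$i)\<^sup>2 / 12 else 0)"
proof -
  let ?c = "midpoint lo hi"
  define G where "G l t = (if l = i then t - ?c$i else 1) * (if l = j then t - ?c$j else 1)" for l t
  have cont: "continuous_on UNIV (G l)" for l
    unfolding G_def by (cases "l = i"; cases "l = j") (auto intro!: continuous_intros)
  have mean: "(LINT t|lborel. G l t * indicator {lo$l..hi$l} t) / (hi$l - lo$l) =
      (if l = i \<and> l = j then (hi$l - lo$l)\<^sup>2 / 12 else if l = i \<or> l = j then 0 else 1)" for l
    using lohi[of l] lborel_integral_Icc_centered[of "lo$l" "hi$l"]
      lborel_integral_Icc_centered_square[of "lo$l" "hi$l"]
    by (auto simp: G_def midpoint_component power2_eq_square power3_eq_cube)
  have "(\<integral>x. (x$i - ?c$i) * (x$j - ?c$j) \<partial>uniform_measure lborel (cbox lo hi)) =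
      (\<integral>x. (\<Prod>l\<in>UNIV. G l (x$l)) \<partial>uniform_measure lborel (cbox lo hi))"
    by (simp add: G_def prod.distrib)
  also have "\<dots> = (\<Prod>l\<in>UNIV. (LINT t|lborel. G l t * indicator {lo$l..hi$l} t) / (hi$l - lo$l))"
    by (rule integral_uniform_box_prod[OF lohi cont])
  also have "\<dots> = (if i = j then (hi$i - lo$i)\<^sup>2 / 12 else 0)"
  proof (cases "i = j")
    case True
    then have "(\<Prod>l\<in>UNIV. if l = i \<and> l = j then (hi$l - lo$l)\<^sup>2 / 12 else if l = i \<or> l = j then 0 else 1) =
        (\<Prod>l\<in>UNIV. if l = i then (hi$l - lo$l)\<^sup>2 / 12 else 1)"
      by (intro prod.cong) auto
    with True show ?thesis
      unfolding mean by (simp add: prod.delta)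
  next
    case False
    then show ?thesis
      unfolding mean by (auto intro: prod_zero)
  qed
  finally show ?thesis .
qed

lemma
  fixes lo hi G :: "real^'n::finite"
  assumes lohi: "\<And>i. lo$i < hi$i"
  shows uniform_box_inner_mean:
      "(\<integral>x. G \<bullet> (x - midpoint lo hi) \<partial>uniform_measure lborel (cbox lo hi)) = 0"
    and uniform_box_inner_square:
      "(\<integral>x. (G \<bullet> (x - midpoint lo hi))\<^sup>2 \<partial>uniform_measure lborel (cbox lo hi)) =
       (\<Sum>i\<in>UNIV. (G$i * (hi$i - lo$i))\<^sup>2) / 12"
proof -
  let ?U = "uniform_measure lborel (cbox lo hi)" and ?c = "midpoint lo hi"
  have int1: "integrable ?U (\<lambda>x. x$i - ?c$i)" for i
    by (rule integrable_uniform_box[OF lohi]) (auto intro!: continuous_intros)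
  have int2: "integrable ?U (\<lambda>x. (x$i - ?c$i) * (x$j - ?c$j))" for i j
    by (rule integrable_uniform_box[OF lohi]) (auto intro!: continuous_intros)
  have inner: "G \<bullet> (x - ?c) = (\<Sum>i\<in>UNIV. G$i * (x$i - ?c$i))" for x
    by (simp add: inner_vec_def)
  show "(\<integral>x. G \<bullet> (x - ?c) \<partial>?U) = 0"
    unfolding inner using int1
    by (simp add: Bochner_Integration.integral_sum uniform_box_coordinate_mean[OF lohi])
  have square: "(G \<bullet> (x - ?c))\<^sup>2 =
      (\<Sum>i\<in>UNIV. \<Sum>j\<in>UNIV. (G$i * G$j) * ((x$i - ?c$i) * (x$j - ?c$j)))" for x
    unfolding power2_eq_square inner sum_product by (simp add: ac_simps)
  have "(\<integral>x. (G \<bullet> (x - ?c))\<^sup>2 \<partial>?U) =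
      (\<Sum>i\<in>UNIV. \<Sum>j\<in>UNIV. (G$i * G$j) * (\<integral>x. (x$i - ?c$i) * (x$j - ?c$j) \<partial>?U))"
    unfolding square using int2 by (simp add: Bochner_Integration.integral_sum)
  also have "\<dots> = (\<Sum>i\<in>UNIV. (G$i * (hi$i - lo$i))\<^sup>2) / 12"
    by (simp add: uniform_box_coordinate_covariance[OF lohi] if_distrib[of "\<lambda>t. _ * t"]
        sum_divide_distrib power2_eq_square mult_ac cong: if_cong)
  finally show "(\<integral>x. (G \<bullet> (x - ?c))\<^sup>2 \<partial>?U) = (\<Sum>i\<in>UNIV. (G$i * (hi$i - lo$i))\<^sup>2) / 12" .
qed

lemma sets_grid_cell [measurable]: "grid_cell m k \<in> sets borel"
  unfolding grid_cell_def by simp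

lemma grid_cell_corners_less:
  assumes "m > 0"
  shows "(\<chi> i. real (k i) / real m) $ i < (\<chi> i. (real (k i) + 1) / real m) $ i"
  using assms by (simp add: divide_strict_right_mono)

lemma prob_space_grid_cell:
  "m > 0 \<Longrightarrow> prob_space (uniform_measure lborel (grid_cell m k))"
  unfolding grid_cell_def by (intro prob_space_uniform_box grid_cell_corners_less)

lemma AE_grid_cell: "AE x in uniform_measure lborel (grid_cell m k). x \<in> grid_cell m k"
  unfolding grid_cell_def by (rule AE_uniform_box)

lemma integrable_grid_cell:
  fixes \<phi> :: "real^'n::finite \<Rightarrow> real"
  assumes "m > 0" "\<phi> \<in> borel_measurable borel" "continuous_on (grid_cell m k) \<phi>"
  shows "integrable (uniform_measure lborel (grid_cell m k)) \<phi>"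
  using integrable_uniform_box[OF grid_cell_corners_less[OF assms(1)], of \<phi>] assms(2,3)
  unfolding grid_cell_def by blast

lemma
  assumes "m > 0"
  shows grid_cell_inner_mean:
      "(\<integral>x. G \<bullet> (x - cell_center m k) \<partial>uniform_measure lborel (grid_cell m k)) = 0"
    and grid_cell_inner_square:
      "(\<integral>x. (G \<bullet> (x - cell_center m k))\<^sup>2 \<partial>uniform_measure lborel (grid_cell m k)) =
       (norm G)\<^sup>2 / (12 * (real m)\<^sup>2)"
proof -
  show "(\<integral>x. G \<bullet> (x - cell_center m k) \<partial>uniform_measure lborel (grid_cell m k)) = 0"
    unfolding grid_cell_def cell_center_eq_midpoint
    by (intro uniform_box_inner_mean grid_cell_corners_less assms)
  have "(norm G)\<^sup>2 = (\<Sum>i\<in>UNIV. (G$i)\<^sup>2)"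
    unfolding dot_square_norm[symmetric] inner_vec_def by (simp add: power2_eq_square)
  then have "(\<Sum>i\<in>UNIV. (G$i * ((\<chi> i. (real (k i) + 1) / real m) $ i - (\<chi> i. real (k i) / real m) $ i))\<^sup>2) / 12 =
      (norm G)\<^sup>2 / (12 * (real m)\<^sup>2)"
    by (simp add: add_divide_distrib power_mult_distrib power_divide sum_divide_distrib mult.commute)
  then show "(\<integral>x. (G \<bullet> (x - cell_center m k))\<^sup>2 \<partial>uniform_measure lborel (grid_cell m k)) =
      (norm G)\<^sup>2 / (12 * (real m)\<^sup>2)"
    unfolding grid_cell_def cell_center_eq_midpoint
    by (subst uniform_box_inner_square) (simp_all add: divide_strict_right_mono assms)
qed

lemma integral_uniform_grid_cell:
  fixes k :: "'n::finite \<Rightarrow> nat"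
  assumes m: "m > 0" and [measurable]: "\<phi> \<in> borel_measurable borel"
    and cont: "continuous_on (grid_cell m k) \<phi>"
  shows "(\<integral>x. \<phi> x \<partial>uniform_measure lborel (grid_cell m k)) =
         real m ^ CARD('n) * integral (grid_cell m k) \<phi>"
proof -
  have "emeasure lborel (grid_cell m k) \<noteq> \<infinity>"
    unfolding grid_cell_def using emeasure_lborel_cbox_finite by (rule less_imp_neq)
  then have "emeasure lborel (grid_cell m k) = ennreal (1 / real m ^ CARD('n))"
    by (simp add: emeasure_eq_ennreal_measure measure_grid_cell[OF m])
  then have "(\<integral>x. \<phi> x \<partial>uniform_measure lborel (grid_cell m k)) =
      (LINT x|lborel. indicator (grid_cell m k) x * \<phi> x) / (1 / real m ^ CARD('n))"
    using m by (intro integral_uniform_measure_lborel) simp_all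
  moreover have "set_integrable lborel (grid_cell m k) \<phi>"
    unfolding set_integrable_def using cont
    by (intro borel_integrable_compact) (simp_all add: grid_cell_def)
  note set_borel_integral_eq_integral(2)[OF this]
  then have "(LINT x|lborel. indicator (grid_cell m k) x * \<phi> x) = integral (grid_cell m k) \<phi>"
    by (simp add: set_lebesgue_integral_def)
  ultimately show ?thesis
    by simp
qed

definition grid_cell_mean :: "(real^'n::finite \<Rightarrow> real) \<Rightarrow> nat \<Rightarrow> ('n \<Rightarrow> nat) \<Rightarrow> real" where
  "grid_cell_mean \<phi> m k = (\<integral>x. \<phi> x \<partial>uniform_measure lborel (grid_cell m k))"

definition grid_cell_var :: "(real^'n::finite \<Rightarrow> real) \<Rightarrow> nat \<Rightarrow> ('n \<Rightarrow> nat) \<Rightarrow> real" where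
  "grid_cell_var \<phi> m k = (\<integral>x. (\<phi> x - grid_cell_mean \<phi> m k)\<^sup>2 \<partial>uniform_measure lborel (grid_cell m k))"

lemma prob_space_strat_sample: "prob_space (strat_sample m)"
  unfolding strat_sample_def
  by (intro prob_space_PiM prob_space_grid_cell mem_grid_index_imp_pos)

section \<open>Riemann sums over the grid\<close>

lemma integral_unit_cube_eq_sum_grid_cells:
  fixes \<phi> :: "real^'n::finite \<Rightarrow> real"
  assumes cont: "continuous_on unit_cube \<phi>" and m: "m > 0"
  shows "integral unit_cube \<phi> = (\<Sum>k\<in>grid_index m. integral (grid_cell m k) \<phi>)"
proof -
  have "(\<phi> has_integral (\<Sum>k\<in>grid_index m. integral (grid_cell m k) \<phi>)) (\<Union>k\<in>grid_index m. grid_cell m k)"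
  proof (rule has_integral_UN[OF finite_grid_index])
    show "(\<phi> has_integral integral (grid_cell m k) \<phi>) (grid_cell m k)" if "k \<in> grid_index m" for k
      using continuous_on_subset[OF cont grid_cell_subset_unit_cube[OF that]]
      unfolding grid_cell_def by (intro integrable_integral integrable_continuous)
    show "pairwise (\<lambda>k k'. negligible (grid_cell m k \<inter> grid_cell m k')) (grid_index m)"
      using negligible_grid_cell_Int[OF m] by (auto simp: pairwise_def)
  qed
  then show ?thesis
    unfolding Union_grid_cells[OF m] by (rule integral_unique)
qed

lemma abs_integral_grid_cell_minus_center:
  fixes k :: "'n::finite \<Rightarrow> nat"
  assumes m: "m > 0" and cont: "continuous_on (grid_cell m k) H"
    and bound: "\<And>x. x \<in> grid_cell m k \<Longrightarrow> \<bar>H x - H (cell_center m k)\<bar> \<le> e"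
  shows "\<bar>integral (grid_cell m k) H - H (cell_center m k) / real m ^ CARD('n)\<bar> \<le> e / real m ^ CARD('n)"
proof -
  let ?C = "grid_cell m k" and ?c = "cell_center m k"
  have "(H has_integral integral ?C H) ?C"
    using cont unfolding grid_cell_def by (intro integrable_integral integrable_continuous)
  moreover have "((\<lambda>x. H ?c) has_integral measure lborel ?C * H ?c) ?C"
    unfolding grid_cell_def using has_integral_const[of "H ?c"] by simp
  ultimately have "((\<lambda>x. H x - H ?c) has_integral (integral ?C H - measure lborel ?C * H ?c)) ?C"
    by (rule has_integral_diff)
  then have "norm (integral ?C H - measure lborel ?C * H ?c) \<le> e * measure lborel ?C"
    using bound cell_center_in_grid_cell[OF m, of k] unfolding grid_cell_def
    by (intro has_integral_bound[where B=e]) (auto simp: grid_cell_def[symmetric], fastforce)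
  then show ?thesis
    using m by (simp add: measure_grid_cell divide_inverse mult.commute)
qed

lemma grid_riemann_sum_tendsto:
  fixes H :: "real^'n::finite \<Rightarrow> real"
  assumes cont: "continuous_on unit_cube H"
  shows "(\<lambda>m. (\<Sum>k\<in>grid_index m. H (cell_center m k)) / real m ^ CARD('n)) \<longlonglongrightarrow> integral unit_cube H"
proof (rule tendstoI)
  fix r :: real assume r: "r > 0"
  obtain \<delta> where \<delta>: "\<delta> > 0"
    "\<And>x x'. x \<in> unit_cube \<Longrightarrow> x' \<in> unit_cube \<Longrightarrow> dist x' x < \<delta> \<Longrightarrow> dist (H x') (H x) < r / 2"
    using compact_uniformly_continuous[OF cont compact_unit_cube, unfolded uniformly_continuous_on_def,
        rule_format, of "r / 2"] r
    by auto
  show "\<forall>\<^sub>F m in sequentially.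
      dist ((\<Sum>k\<in>grid_index m. H (cell_center m k)) / real m ^ CARD('n)) (integral unit_cube H) < r"
    using eventually_grid_cell_dist_less[OF \<delta>(1), where 'n='n]
  proof eventually_elim
    case (elim m)
    then have m: "m > 0" by blast
    let ?N = "real m ^ CARD('n)" and ?K = "grid_index m :: ('n \<Rightarrow> nat) set"
    have cell: "\<bar>integral (grid_cell m k) H - H (cell_center m k) / ?N\<bar> \<le> (r / 2) / ?N"
      if k: "k \<in> grid_index m" for k
    proof (rule abs_integral_grid_cell_minus_center[OF m])
      show "continuous_on (grid_cell m k) H"
        using cont grid_cell_subset_unit_cube[OF k] by (rule continuous_on_subset)
      show "\<bar>H x - H (cell_center m k)\<bar> \<le> r / 2" if "x \<in> grid_cell m k" for x
        using \<delta>(2)[of "cell_center m k" x] elim that cell_center_in_grid_cell[OF m, of k]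
          grid_cell_subset_unit_cube[OF k] by (force simp: dist_real_def)
    qed
    have "\<bar>(\<Sum>k\<in>grid_index m. H (cell_center m k)) / ?N - integral unit_cube H\<bar> =
        \<bar>\<Sum>k\<in>grid_index m. integral (grid_cell m k) H - H (cell_center m k) / ?N\<bar>"
      by (simp add: integral_unit_cube_eq_sum_grid_cells[OF cont m] sum_subtractf
          sum_divide_distrib abs_minus_commute)
    also have "\<dots> \<le> (\<Sum>k\<in>grid_index m. \<bar>integral (grid_cell m k) H - H (cell_center m k) / ?N\<bar>)"
      by (rule sum_abs)
    also have "\<dots> \<le> (\<Sum>k\<in>?K. (r / 2) / ?N)"
      using cell by (intro sum_mono) simp
    also have "\<dots> = r / 2"
      using m by (simp add: card_grid_index)
    finally show ?case
      using r by (simp add: dist_real_def)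
  qed
qed

section \<open>Sums of independent bounded centred variables\<close>

lemma (in prob_space) abs_expectation_le_const:
  fixes f :: "'a \<Rightarrow> real"
  assumes "f \<in> borel_measurable M" "AE x in M. \<bar>f x\<bar> \<le> B"
  shows "\<bar>expectation f\<bar> \<le> B"
proof -
  have "integrable M f"
    using assms by (intro integrable_const_bound[where B=B]) auto
  then have "expectation (\<lambda>x. \<bar>f x\<bar>) \<le> B"
    using assms(2) by (intro integral_le_const) auto
  then show ?thesis
    using integral_abs_bound[of M f] by linarith
qed

lemma (in prob_space) abs_variance_minus_linear_part:
  fixes Y L :: "'a \<Rightarrow> real"
  assumes [measurable]: "Y \<in> borel_measurable M" "L \<in> borel_measurable M"
    and mean_L: "expectation L = 0"
    and bound_L: "AE x in M. \<bar>L x\<bar> \<le> a"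
    and bound_rest: "AE x in M. \<bar>Y x - c - L x\<bar> \<le> b"
  shows "\<bar>variance Y - expectation (\<lambda>x. (L x)\<^sup>2)\<bar> \<le> 4 * a * b + 4 * b\<^sup>2"
proof -
  define r where "r x = Y x - c - L x" for x
  define s where "s x = r x - expectation r" for x
  have [measurable]: "r \<in> borel_measurable M" "s \<in> borel_measurable M"
    unfolding r_def s_def by measurable
  have int_L: "integrable M L" and int_r: "integrable M r"
    using bound_L bound_rest unfolding r_def
    by (auto intro: integrable_const_bound[where B=a] integrable_const_bound[where B=b])
  have "\<bar>expectation r\<bar> \<le> b"
    using bound_rest unfolding r_def by (intro abs_expectation_le_const) auto
  have bound_s: "AE x in M. \<bar>s x\<bar> \<le> 2 * b"
    using bound_rest
  proof eventually_elim
    case (elim x)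
    with \<open>\<bar>expectation r\<bar> \<le> b\<close> show ?case
      unfolding s_def r_def by linarith
  qed
  \<comment> \<open>Since the linear part is centred, Y minus its mean is L plus a small term s.\<close>
  have "Y = (\<lambda>x. c + L x + r x)"
    by (simp add: r_def)
  then have "expectation Y = c + expectation r"
    using int_L int_r mean_L prob_space by simp
  then have centred: "(Y x - expectation Y)\<^sup>2 = (L x)\<^sup>2 + (2 * L x * s x + (s x)\<^sup>2)" for x
    by (simp add: s_def r_def power2_eq_square algebra_simps)
  have bound_cross: "AE x in M. \<bar>2 * L x * s x + (s x)\<^sup>2\<bar> \<le> 4 * a * b + 4 * b\<^sup>2"
    using bound_L bound_s
  proof eventually_elim
    case (elim x)
    have "\<bar>L x\<bar> * \<bar>s x\<bar> \<le> a * (2 * b)"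
      using elim by (intro mult_mono) auto
    moreover have "\<bar>s x\<bar>\<^sup>2 \<le> (2 * b)\<^sup>2"
      using elim(2) by (rule power_mono) simp
    moreover have "\<bar>2 * L x * s x + (s x)\<^sup>2\<bar> \<le> 2 * (\<bar>L x\<bar> * \<bar>s x\<bar>) + \<bar>s x\<bar>\<^sup>2"
      using abs_triangle_ineq[of "2 * L x * s x" "(s x)\<^sup>2"] by (simp add: abs_mult)
    ultimately show ?case
      by (simp add: power_mult_distrib)
  qed
  have "integrable M (\<lambda>x. (L x)\<^sup>2)"
    using bound_L by (intro integrable_const_bound[where B="a\<^sup>2"])
      (auto elim!: eventually_mono, metis abs_ge_zero abs_power2 power2_abs power_mono)
  moreover have "integrable M (\<lambda>x. 2 * L x * s x + (s x)\<^sup>2)"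
    using bound_cross by (intro integrable_const_bound) auto
  ultimately have "variance Y - expectation (\<lambda>x. (L x)\<^sup>2) = expectation (\<lambda>x. 2 * L x * s x + (s x)\<^sup>2)"
    unfolding centred by simp
  also have "\<bar>\<dots>\<bar> \<le> 4 * a * b + 4 * b\<^sup>2"
    using bound_cross by (intro abs_expectation_le_const) auto
  finally show ?thesis .
qed

lemma abs_exp_neg_minus_linear_le:
  fixes y :: real
  assumes y: "0 \<le> y"
  shows "\<bar>exp (- y) - (1 - y)\<bar> \<le> y\<^sup>2"
proof -
  have "1 \<le> (1 - y + y\<^sup>2) * (1 + y + y\<^sup>2 / 2)"
    using y by (simp add: field_simps power2_eq_square)
  moreover have "0 \<le> 1 - y + y\<^sup>2"
    using sum_power2_ge_zero[of "y - 1/2" "sqrt (3/4)"] by (simp add: power2_eq_square algebra_simps)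
  ultimately have "1 \<le> (1 - y + y\<^sup>2) * exp y"
    using exp_lower_Taylor_quadratic[OF y] by (meson mult_left_mono order_trans)
  then have "exp (- y) \<le> 1 - y + y\<^sup>2"
    by (simp add: exp_minus field_simps)
  with exp_ge_add_one_self[of "- y"] show ?thesis
    by simp
qed

lemma (in prob_space) char_bounded_centered:
  fixes X :: "'a \<Rightarrow> real"
  assumes [measurable]: "X \<in> borel_measurable M"
    and mean: "expectation X = 0" and bound: "AE x in M. \<bar>X x\<bar> \<le> B"
  shows "cmod (char (distr M borel X) t - complex_of_real (exp (- (t\<^sup>2 * expectation (\<lambda>x. (X x)\<^sup>2) / 2))))
    \<le> \<bar>t\<bar> ^ 3 * B ^ 3 / 6 + (t\<^sup>2 / 2)\<^sup>2 * B ^ 4"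
proof -
  define v where "v = expectation (\<lambda>x. (X x)\<^sup>2)"
  have "AE x in M. 0 \<le> B"
    using bound by eventually_elim auto
  then have B: "0 \<le> B"
    by simp
  have bound2: "AE x in M. \<bar>(X x)\<^sup>2\<bar> \<le> B\<^sup>2"
    using bound by eventually_elim (metis abs_ge_zero abs_power2 power2_abs power_mono)
  have int: "integrable M X" "integrable M (\<lambda>x. (X x)\<^sup>2)"
    using bound bound2 by (auto intro: integrable_const_bound[where B=B] integrable_const_bound[where B="B\<^sup>2"])
  have "0 \<le> v" "v \<le> B\<^sup>2"
    unfolding v_def using abs_expectation_le_const[OF _ bound2] by auto
  have "cmod (char (distr M borel X) t - (1 - t\<^sup>2 * v / 2)) \<le>
      t\<^sup>2 / 6 * expectation (\<lambda>x. min (6 * (X x)\<^sup>2) (\<bar>t\<bar> * \<bar>X x\<bar> ^ 3))"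
    using int mean by (intro char_approx3') (simp_all add: v_def)
  also have "\<dots> \<le> t\<^sup>2 / 6 * (\<bar>t\<bar> * B ^ 3)"
  proof (intro mult_left_mono order.trans[OF abs_ge_self abs_expectation_le_const])
    show "AE x in M. \<bar>min (6 * (X x)\<^sup>2) (\<bar>t\<bar> * \<bar>X x\<bar> ^ 3)\<bar> \<le> \<bar>t\<bar> * B ^ 3"
      using bound
    proof eventually_elim
      case (elim x)
      have "\<bar>min (6 * (X x)\<^sup>2) (\<bar>t\<bar> * \<bar>X x\<bar> ^ 3)\<bar> \<le> \<bar>t\<bar> * \<bar>X x\<bar> ^ 3"
        by simp
      also have "\<dots> \<le> \<bar>t\<bar> * B ^ 3"
        using elim by (intro mult_left_mono power_mono) auto
      finally show ?case .
    qed
  qed auto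
  also have "\<dots> = \<bar>t\<bar> ^ 3 * B ^ 3 / 6"
    by (simp add: power2_eq_square power3_eq_cube abs_mult_self_eq)
  finally have taylor: "cmod (char (distr M borel X) t - (1 - t\<^sup>2 * v / 2)) \<le> \<bar>t\<bar> ^ 3 * B ^ 3 / 6" .
  have "\<bar>exp (- (t\<^sup>2 * v / 2)) - (1 - t\<^sup>2 * v / 2)\<bar> \<le> (t\<^sup>2 * v / 2)\<^sup>2"
    using \<open>0 \<le> v\<close> by (intro abs_exp_neg_minus_linear_le) simp
  also have "\<dots> = (t\<^sup>2 / 2)\<^sup>2 * v\<^sup>2"
    by (simp add: power2_eq_square field_simps)
  also have "\<dots> \<le> (t\<^sup>2 / 2)\<^sup>2 * B ^ 4"
    using power_mono[OF \<open>v \<le> B\<^sup>2\<close> \<open>0 \<le> v\<close>, of 2]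
    by (intro mult_left_mono) (simp_all flip: power_mult)
  finally have "cmod (complex_of_real (1 - t\<^sup>2 * v / 2) - complex_of_real (exp (- (t\<^sup>2 * v / 2))))
      \<le> (t\<^sup>2 / 2)\<^sup>2 * B ^ 4"
    by (simp only: of_real_diff[symmetric] norm_of_real abs_minus_commute)
  with taylor show ?thesis
    unfolding v_def[symmetric] by (rule norm_diff_triangle_le)
qed

lemma char_distr_PiM_sum:
  fixes M :: "'i \<Rightarrow> 'a measure" and X :: "'i \<Rightarrow> 'a \<Rightarrow> real"
  assumes fin: "finite I" and ps: "\<And>i. prob_space (M i)"
    and meas: "\<And>i. i \<in> I \<Longrightarrow> X i \<in> borel_measurable (M i)"
  shows "char (distr (Pi\<^sub>M I M) borel (\<lambda>U. \<Sum>i\<in>I. X i (U i))) t = (\<Prod>i\<in>I. char (distr (M i) borel (X i)) t)"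
proof -
  interpret product_prob_space M
    by (simp add: product_prob_space_def product_prob_space_axioms_def product_sigma_finite_def ps
        prob_space_imp_sigma_finite)
  have meas_sum: "(\<lambda>U. \<Sum>i\<in>I. X i (U i)) \<in> borel_measurable (Pi\<^sub>M I M)"
    using meas by (intro borel_measurable_sum measurable_compose[OF measurable_component_singleton])
  have int: "integrable (M i) (\<lambda>x. iexp (t * X i x))" if "i \<in> I" for i
    using meas[OF that] ps[of i]
    by (intro finite_measure.integrable_const_bound[where B=1])
      (auto simp: norm_exp_i_times prob_space_def)
  have "char (distr (Pi\<^sub>M I M) borel (\<lambda>U. \<Sum>i\<in>I. X i (U i))) t =
      (CLINT U|Pi\<^sub>M I M. iexp (t * (\<Sum>i\<in>I. X i (U i))))"
    unfolding char_def by (rule integral_distr[OF meas_sum]) simp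
  also have "\<dots> = (CLINT U|Pi\<^sub>M I M. (\<Prod>i\<in>I. iexp (t * X i (U i))))"
    by (simp add: sum_distrib_left exp_sum[OF fin])
  also have "\<dots> = (\<Prod>i\<in>I. CLINT x|M i. iexp (t * X i x))"
    by (rule product_integral_prod[OF fin int])
  also have "\<dots> = (\<Prod>i\<in>I. char (distr (M i) borel (X i)) t)"
    unfolding char_def using meas by (intro prod.cong refl integral_distr[symmetric]) auto
  finally show ?thesis .
qed

lemma char_PiM_sum_bounded_centered:
  fixes M :: "'i \<Rightarrow> 'a measure" and X :: "'i \<Rightarrow> 'a \<Rightarrow> real"
  assumes fin: "finite I" and ps: "\<And>i. prob_space (M i)"
    and meas: "\<And>i. i \<in> I \<Longrightarrow> X i \<in> borel_measurable (M i)"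
    and mean: "\<And>i. i \<in> I \<Longrightarrow> integral\<^sup>L (M i) (X i) = 0"
    and bound: "\<And>i. i \<in> I \<Longrightarrow> AE x in M i. \<bar>X i x\<bar> \<le> B"
  shows "cmod (char (distr (Pi\<^sub>M I M) borel (\<lambda>U. \<Sum>i\<in>I. X i (U i))) t -
           complex_of_real (exp (- (t\<^sup>2 / 2) * (\<Sum>i\<in>I. integral\<^sup>L (M i) (\<lambda>x. (X i x)\<^sup>2)))))
    \<le> real (card I) * (\<bar>t\<bar> ^ 3 * B ^ 3 / 6 + (t\<^sup>2 / 2)\<^sup>2 * B ^ 4)"
proof -
  define e where "e i = complex_of_real (exp (- (t\<^sup>2 * integral\<^sup>L (M i) (\<lambda>x. (X i x)\<^sup>2) / 2)))" for i
  have "exp (- (t\<^sup>2 / 2) * (\<Sum>i\<in>I. integral\<^sup>L (M i) (\<lambda>x. (X i x)\<^sup>2))) =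
      (\<Prod>i\<in>I. exp (- (t\<^sup>2 * integral\<^sup>L (M i) (\<lambda>x. (X i x)\<^sup>2) / 2)))"
    by (simp add: exp_sum[OF fin, symmetric] sum_distrib_left sum_negf)
  then have prod_e: "complex_of_real (exp (- (t\<^sup>2 / 2) * (\<Sum>i\<in>I. integral\<^sup>L (M i) (\<lambda>x. (X i x)\<^sup>2)))) =
      (\<Prod>i\<in>I. e i)"
    by (simp add: e_def)
  have "cmod ((\<Prod>i\<in>I. char (distr (M i) borel (X i)) t) - (\<Prod>i\<in>I. e i)) \<le>
      (\<Sum>i\<in>I. cmod (char (distr (M i) borel (X i)) t - e i))"
  proof (rule norm_prod_diff)
    show "cmod (char (distr (M i) borel (X i)) t) \<le> 1" if "i \<in> I" for i
      using prob_space.real_distribution_distr[OF ps meas[OF that]]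
      by (rule real_distribution.cmod_char_le_1)
    show "cmod (e i) \<le> 1" if "i \<in> I" for i
      unfolding e_def by simp
  qed
  also have "\<dots> \<le> (\<Sum>i\<in>I. \<bar>t\<bar> ^ 3 * B ^ 3 / 6 + (t\<^sup>2 / 2)\<^sup>2 * B ^ 4)"
    unfolding e_def using prob_space.char_bounded_centered[OF ps meas mean bound]
    by (intro sum_mono) auto
  also have "\<dots> = real (card I) * (\<bar>t\<bar> ^ 3 * B ^ 3 / 6 + (t\<^sup>2 / 2)\<^sup>2 * B ^ 4)"
    by simp
  finally show ?thesis
    by (simp only: char_distr_PiM_sum[OF fin ps meas] prod_e)
qed

lemma Lyapunov_bound_tendsto_zero:
  fixes N :: "'a \<Rightarrow> real"
  assumes N: "filterlim N at_top F"
  shows "((\<lambda>x. N x * (a * (c / sqrt (N x)) ^ 3 + b * (c / sqrt (N x)) ^ 4)) \<longlongrightarrow> 0) F"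
proof -
  have "filterlim (\<lambda>x. sqrt (N x)) at_top F"
    using sqrt_at_top N by (rule filterlim_compose)
  then have "((\<lambda>x. 1 / sqrt (N x)) \<longlongrightarrow> 0) F" "((\<lambda>x. 1 / N x) \<longlongrightarrow> 0) F"
    using N by (auto intro!: tendsto_divide_0[OF tendsto_const] filterlim_at_top_imp_at_infinity)
  then have "((\<lambda>x. a * c ^ 3 * (1 / sqrt (N x)) + b * c ^ 4 * (1 / N x)) \<longlongrightarrow>
      a * c ^ 3 * 0 + b * c ^ 4 * 0) F"
    by (intro tendsto_add tendsto_mult tendsto_const)
  moreover have "\<forall>\<^sub>F x in F. 0 < N x"
    using N unfolding filterlim_at_top_dense by blast
  then have "\<forall>\<^sub>F x in F. a * c ^ 3 * (1 / sqrt (N x)) + b * c ^ 4 * (1 / N x) =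
      N x * (a * (c / sqrt (N x)) ^ 3 + b * (c / sqrt (N x)) ^ 4)"
  proof eventually_elim
    case (elim x)
    then have "sqrt (N x) * sqrt (N x) = N x"
      by simp
    with elim show ?case
      by (simp add: power_divide field_simps power3_eq_cube power4_eq_xxxx)
  qed
  ultimately show ?thesis
    by (simp add: tendsto_cong)
qed

section \<open>Continuously differentiable functions on the unit cube\<close>

lemma onorm_inner_le: "onorm (\<lambda>h. v \<bullet> h) \<le> norm (v::real^'n::finite)"
  using onorm_inner_right[of "\<lambda>x. x" v] by (simp add: onorm_id bounded_linear_ident)

locale C1_unit_cube =
  fixes f :: "real^'n::finite \<Rightarrow> real" and gradf :: "real^'n \<Rightarrow> real^'n"
  assumes has_derivative_f:
      "\<And>x. x \<in> unit_cube \<Longrightarrow> (f has_derivative (\<lambda>h. gradf x \<bullet> h)) (at x within unit_cube)"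
    and continuous_gradf: "continuous_on unit_cube gradf"
begin

lemma continuous_on_f: "continuous_on unit_cube f"
  using has_derivative_f has_derivative_continuous continuous_on_eq_continuous_within by blast

lemma borel_measurable_on_cube [measurable]: "on_cube f \<in> borel_measurable borel"
  unfolding on_cube_def unit_cube_def using continuous_on_f
  by (intro borel_measurable_continuous_on_if) (simp_all add: unit_cube_def)

lemma continuous_on_grid_cell_on_cube:
  assumes "k \<in> grid_index m"
  shows "continuous_on (grid_cell m k) (on_cube f)"
proof -
  have "continuous_on (grid_cell m k) f"
    using continuous_on_f grid_cell_subset_unit_cube[OF assms] by (rule continuous_on_subset)
  then show ?thesis
    by (rule continuous_on_eq) (use grid_cell_subset_unit_cube[OF assms] in \<open>auto simp: on_cube_def\<close>)
qed

definition grad_bound :: real where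
  "grad_bound = (SOME B. 0 \<le> B \<and> (\<forall>x\<in>unit_cube. norm (gradf x) \<le> B))"

lemma grad_bound: "0 \<le> grad_bound" "x \<in> unit_cube \<Longrightarrow> norm (gradf x) \<le> grad_bound"
proof -
  have "bounded (gradf ` unit_cube)"
    by (intro compact_imp_bounded compact_continuous_image continuous_gradf compact_unit_cube)
  then obtain B where "\<forall>x\<in>unit_cube. norm (gradf x) \<le> B"
    unfolding bounded_iff by blast
  then have "\<exists>B. 0 \<le> B \<and> (\<forall>x\<in>unit_cube. norm (gradf x) \<le> B)"
    by (intro exI[of _ "max B 0"]) auto
  from someI_ex[OF this] show "0 \<le> grad_bound" "x \<in> unit_cube \<Longrightarrow> norm (gradf x) \<le> grad_bound"
    unfolding grad_bound_def by auto
qed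

lemma abs_f_diff_le:
  assumes "x \<in> unit_cube" "y \<in> unit_cube"
  shows "\<bar>f x - f y\<bar> \<le> grad_bound * norm (x - y)"
  using differentiable_bound[OF convex_unit_cube has_derivative_f _ assms]
    onorm_inner_le grad_bound(2) order_trans
  by (metis real_norm_def)

lemma eventually_grid_cell_taylor:
  assumes e: "e > 0"
  shows "\<forall>\<^sub>F m in sequentially. \<forall>k\<in>grid_index m. \<forall>x\<in>grid_cell m k.
     \<bar>f x - f (cell_center m k) - gradf (cell_center m k) \<bullet> (x - cell_center m k)\<bar> \<le> e / real m"
proof -
  let ?d = "real CARD('n)"
  obtain \<delta> where \<delta>: "\<delta> > 0"
    "\<And>x x'. x \<in> unit_cube \<Longrightarrow> x' \<in> unit_cube \<Longrightarrow> dist x' x < \<delta> \<Longrightarrow> dist (gradf x') (gradf x) < e / ?d"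
    using compact_uniformly_continuous[OF continuous_gradf compact_unit_cube,
        unfolded uniformly_continuous_on_def, rule_format, of "e / ?d"] e
    by auto
  show ?thesis
    using eventually_grid_cell_dist_less[OF \<delta>(1), where 'n='n]
  proof (eventually_elim, intro ballI)
    case (elim m)
    then have m: "m > 0" by blast
    fix k :: "'n \<Rightarrow> nat" and x
    assume k: "k \<in> grid_index m" and x: "x \<in> grid_cell m k"
    let ?C = "grid_cell m k" and ?c = "cell_center m k"
    have sub: "?C \<subseteq> unit_cube" and c: "?c \<in> ?C"
      using grid_cell_subset_unit_cube[OF k] cell_center_in_grid_cell[OF m] by auto
    \<comment> \<open>The mean value inequality for f minus its tangent plane at the centre.\<close>
    define h where "h y = f y - gradf ?c \<bullet> y" for y
    have "(h has_derivative (\<lambda>v. (gradf y - gradf ?c) \<bullet> v)) (at y within ?C)" if "y \<in> ?C" for y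
      unfolding h_def inner_diff_left
      using has_derivative_subset[OF has_derivative_f sub] that sub
      by (auto intro!: derivative_eq_intros)
    moreover have "onorm (\<lambda>v. (gradf y - gradf ?c) \<bullet> v) \<le> e / ?d" if "y \<in> ?C" for y
    proof -
      have "dist (gradf y) (gradf ?c) < e / ?d"
        using \<delta>(2)[of ?c y] elim that c sub by blast
      then show ?thesis
        using onorm_inner_le[of "gradf y - gradf ?c"] by (simp add: dist_norm)
    qed
    ultimately have "norm (h x - h ?c) \<le> e / ?d * norm (x - ?c)"
      using x c unfolding grid_cell_def by (intro differentiable_bound[OF convex_box(1)]) auto
    also have "\<dots> \<le> e / ?d * (?d / real m)"
      using grid_cell_dist_center[OF m x] e by (intro mult_left_mono) auto
    also have "\<dots> = e / real m"
      by simp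
    finally show "\<bar>f x - f ?c - gradf ?c \<bullet> (x - ?c)\<bar> \<le> e / real m"
      by (simp add: h_def inner_diff_right algebra_simps)
  qed
qed

lemma grid_cell_mean_on_cube:
  assumes m: "m > 0" and k: "k \<in> grid_index m"
  shows "grid_cell_mean (on_cube f) m k = real m ^ CARD('n) * integral (grid_cell m k) f"
proof -
  have "integral (grid_cell m k) (on_cube f) = integral (grid_cell m k) f"
    using grid_cell_subset_unit_cube[OF k] by (intro integral_cong) (auto simp: on_cube_def)
  then show ?thesis
    unfolding grid_cell_mean_def
    by (simp add: integral_uniform_grid_cell[OF m _ continuous_on_grid_cell_on_cube[OF k]])
qed

lemma abs_on_cube_minus_grid_cell_mean:
  assumes m: "m > 0" and k: "k \<in> grid_index m" and x: "x \<in> grid_cell m k"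
  shows "\<bar>on_cube f x - grid_cell_mean (on_cube f) m k\<bar> \<le> grad_bound * real CARD('n) / real m"
proof -
  interpret prob_space "uniform_measure lborel (grid_cell m k)"
    using m by (rule prob_space_grid_cell)
  have "integrable (uniform_measure lborel (grid_cell m k)) (on_cube f)"
    using m borel_measurable_on_cube continuous_on_grid_cell_on_cube[OF k]
    by (rule integrable_grid_cell)
  moreover have "prob UNIV = 1"
    using prob_space by simp
  ultimately have "on_cube f x - grid_cell_mean (on_cube f) m k = expectation (\<lambda>y. on_cube f x - on_cube f y)"
    by (simp add: grid_cell_mean_def)
  also have "\<bar>\<dots>\<bar> \<le> grad_bound * real CARD('n) / real m"
  proof (rule abs_expectation_le_const)
    show "AE y in uniform_measure lborel (grid_cell m k). \<bar>on_cube f x - on_cube f y\<bar> \<le> grad_bound * real CARD('n) / real m"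
      using AE_grid_cell
    proof eventually_elim
      case (elim y)
      have "x \<in> unit_cube" "y \<in> unit_cube"
        using x elim grid_cell_subset_unit_cube[OF k] by auto
      then have "\<bar>on_cube f x - on_cube f y\<bar> \<le> grad_bound * norm (x - y)"
        by (simp add: on_cube_def abs_f_diff_le)
      also have "\<dots> \<le> grad_bound * (real CARD('n) / real m)"
        using grid_cell_dist[OF m x elim] grad_bound(1) by (rule mult_left_mono)
      finally show ?case
        by simp
    qed
  qed simp
  finally show ?thesis .
qed

lemma abs_grid_cell_var_minus_gradient_term:
  assumes m: "m > 0" and k: "k \<in> grid_index m"
    and taylor: "\<And>x. x \<in> grid_cell m k \<Longrightarrow>
      \<bar>f x - f (cell_center m k) - gradf (cell_center m k) \<bullet> (x - cell_center m k)\<bar> \<le> b"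
  shows "\<bar>grid_cell_var (on_cube f) m k - (norm (gradf (cell_center m k)))\<^sup>2 / (12 * (real m)\<^sup>2)\<bar>
    \<le> 4 * (grad_bound * real CARD('n) / real m) * b + 4 * b\<^sup>2"
proof -
  let ?U = "uniform_measure lborel (grid_cell m k)" and ?c = "cell_center m k"
  interpret prob_space ?U
    using m by (rule prob_space_grid_cell)
  have c: "?c \<in> unit_cube"
    using grid_cell_subset_unit_cube[OF k] cell_center_in_grid_cell[OF m] by blast
  \<comment> \<open>The tangent plane at the centre has mean zero and variance given by the second moments of
    the uniform distribution on the cell.\<close>
  define L where "L x = gradf ?c \<bullet> (x - ?c)" for x
  have "variance (on_cube f) = grid_cell_var (on_cube f) m k"
    by (simp add: grid_cell_var_def grid_cell_mean_def)
  moreover have "expectation (\<lambda>x. (L x)\<^sup>2) = (norm (gradf ?c))\<^sup>2 / (12 * (real m)\<^sup>2)"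
    unfolding L_def using m by (rule grid_cell_inner_square)
  moreover have "\<bar>variance (on_cube f) - expectation (\<lambda>x. (L x)\<^sup>2)\<bar>
      \<le> 4 * (grad_bound * real CARD('n) / real m) * b + 4 * b\<^sup>2"
  proof (rule abs_variance_minus_linear_part[where c="f ?c"])
    show "on_cube f \<in> borel_measurable ?U" "L \<in> borel_measurable ?U"
      unfolding L_def by (simp_all add: borel_measurable_uniform_measure)
    show "expectation L = 0"
      unfolding L_def using m by (rule grid_cell_inner_mean)
    show "AE x in ?U. \<bar>L x\<bar> \<le> grad_bound * real CARD('n) / real m"
      using AE_grid_cell
    proof eventually_elim
      case (elim x)
      have "\<bar>L x\<bar> \<le> norm (gradf ?c) * norm (x - ?c)"
        unfolding L_def by (rule Cauchy_Schwarz_ineq2)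
      also have "\<dots> \<le> grad_bound * (real CARD('n) / real m)"
        using grad_bound grid_cell_dist_center[OF m elim] c by (intro mult_mono) auto
      finally show ?case
        by simp
    qed
    show "AE x in ?U. \<bar>on_cube f x - f ?c - L x\<bar> \<le> b"
      using AE_grid_cell
    proof eventually_elim
      case (elim x)
      then show ?case
        using taylor grid_cell_subset_unit_cube[OF k] by (auto simp: L_def on_cube_def)
    qed
  qed
  ultimately show ?thesis
    by simp
qed

lemma eventually_grid_cell_var:
  assumes e: "e > 0"
  shows "\<forall>\<^sub>F m in sequentially. \<forall>k\<in>grid_index m.
     \<bar>grid_cell_var (on_cube f) m k - (norm (gradf (cell_center m k)))\<^sup>2 / (12 * (real m)\<^sup>2)\<bar> \<le> e / (real m)\<^sup>2"
proof -
  let ?d = "real CARD('n)"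
  define \<epsilon> where "\<epsilon> = min 1 (e / (4 * grad_bound * ?d + 4))"
  have den: "4 * grad_bound * ?d + 4 > 0"
    using grad_bound(1) by (simp add: add_nonneg_pos)
  have \<epsilon>: "0 < \<epsilon>" "\<epsilon> \<le> 1" "\<epsilon> \<le> e / (4 * grad_bound * ?d + 4)"
    using e den by (auto simp: \<epsilon>_def)
  then have "(4 * grad_bound * ?d + 4) * \<epsilon> \<le> e"
    using den by (simp add: field_simps)
  moreover have "\<epsilon>\<^sup>2 \<le> \<epsilon>"
    unfolding power2_eq_square using \<epsilon>(1,2) by (intro mult_left_le) auto
  ultimately have small: "4 * grad_bound * ?d * \<epsilon> + 4 * \<epsilon>\<^sup>2 \<le> e"
    by (simp add: algebra_simps)
  show ?thesis
    using eventually_grid_cell_taylor[OF \<epsilon>(1)] eventually_gt_at_top[of "0::nat"]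
  proof (eventually_elim, intro ballI)
    case (elim m)
    fix k :: "'n \<Rightarrow> nat"
    assume k: "k \<in> grid_index m"
    have "\<bar>grid_cell_var (on_cube f) m k - (norm (gradf (cell_center m k)))\<^sup>2 / (12 * (real m)\<^sup>2)\<bar>
        \<le> 4 * (grad_bound * ?d / real m) * (\<epsilon> / real m) + 4 * (\<epsilon> / real m)\<^sup>2"
      using elim k by (intro abs_grid_cell_var_minus_gradient_term) auto
    also have "\<dots> = (4 * grad_bound * ?d * \<epsilon> + 4 * \<epsilon>\<^sup>2) / (real m)\<^sup>2"
      by (simp add: field_simps power2_eq_square add_divide_distrib)
    also have "\<dots> \<le> e / (real m)\<^sup>2"
      using small by (rule divide_right_mono) simp
    finally show "\<bar>grid_cell_var (on_cube f) m k - (norm (gradf (cell_center m k)))\<^sup>2 / (12 * (real m)\<^sup>2)\<bar>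
        \<le> e / (real m)\<^sup>2" .
  qed
qed

lemma grid_cell_var_sum_tendsto:
  "(\<lambda>m. (real m)\<^sup>2 / real m ^ CARD('n) * (\<Sum>k\<in>grid_index m. grid_cell_var (on_cube f) m k))
     \<longlonglongrightarrow> 1/12 * integral unit_cube (\<lambda>x. (norm (gradf x))\<^sup>2)"
proof -
  define H where "H x = (norm (gradf x))\<^sup>2" for x
  define W where "W m = (real m)\<^sup>2 / real m ^ CARD('n) * (\<Sum>k\<in>grid_index m. grid_cell_var (on_cube f) m k)"
    for m
  define R where "R m = (\<Sum>k\<in>grid_index m. H (cell_center m k)) / real m ^ CARD('n)" for m
  have R: "R \<longlonglongrightarrow> integral unit_cube H"
    unfolding R_def H_def by (intro grid_riemann_sum_tendsto continuous_intros continuous_gradf)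
  have W_minus_R: "(\<lambda>m. W m - R m / 12) \<longlonglongrightarrow> 0"
  proof (rule tendstoI)
    fix r :: real
    assume r: "r > 0"
    show "\<forall>\<^sub>F m in sequentially. dist (W m - R m / 12) 0 < r"
      using eventually_grid_cell_var[OF half_gt_zero[OF r]] eventually_gt_at_top[of "0::nat"]
    proof eventually_elim
      case (elim m)
      let ?N = "real m ^ CARD('n)" and ?K = "grid_index m :: ('n \<Rightarrow> nat) set"
      have "R m / 12 = (real m)\<^sup>2 / ?N * (\<Sum>k\<in>?K. H (cell_center m k) / (12 * (real m)\<^sup>2))"
        using elim(2) by (simp add: R_def flip: sum_divide_distrib)
      then have diff: "W m - R m / 12 = (real m)\<^sup>2 / ?N *
          (\<Sum>k\<in>?K. grid_cell_var (on_cube f) m k - H (cell_center m k) / (12 * (real m)\<^sup>2))"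
        by (simp add: W_def sum_subtractf right_diff_distrib)
      have "\<bar>\<Sum>k\<in>?K. grid_cell_var (on_cube f) m k - H (cell_center m k) / (12 * (real m)\<^sup>2)\<bar>
          \<le> (\<Sum>k\<in>?K. (r / 2) / (real m)\<^sup>2)"
        using elim(1) by (intro order.trans[OF sum_abs] sum_mono) (simp add: H_def)
      then have "\<bar>W m - R m / 12\<bar> \<le> (real m)\<^sup>2 / ?N * (\<Sum>k\<in>?K. (r / 2) / (real m)\<^sup>2)"
        unfolding diff abs_mult by (intro mult_mono) auto
      also have "\<dots> = r / 2"
        using elim(2) by (simp add: card_grid_index)
      finally show ?case
        using r by simp
    qed
  qed
  have "(\<lambda>m. (W m - R m / 12) + R m / 12) \<longlonglongrightarrow> 0 + integral unit_cube H / 12"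
    by (rule tendsto_add[OF W_minus_R tendsto_divide[OF R tendsto_const]]) simp
  then show ?thesis
    by (simp add: W_def H_def[abs_def])
qed

section \<open>The stratified estimate\<close>

lemma borel_measurable_strat_estimate [measurable]:
  "strat_estimate f m \<in> borel_measurable (strat_sample m)"
proof -
  have "(\<lambda>U. on_cube f (U k)) \<in> borel_measurable (strat_sample m)" if "k \<in> grid_index m" for k
    unfolding strat_sample_def
    by (rule measurable_compose[OF measurable_component_singleton[OF that]])
      (simp add: borel_measurable_uniform_measure)
  then show ?thesis
    unfolding strat_estimate_def by measurable
qed

lemma strat_estimate_minus_integral:
  assumes m: "m > 0"
  shows "strat_estimate f m U - integral unit_cube f =
    (\<Sum>k\<in>grid_index m. on_cube f (U k) - grid_cell_mean (on_cube f) m k) / real m ^ CARD('n)"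
proof -
  have "integral unit_cube f = (\<Sum>k\<in>grid_index m. grid_cell_mean (on_cube f) m k) / real m ^ CARD('n)"
    using m by (simp add: integral_unit_cube_eq_sum_grid_cells[OF continuous_on_f m]
        grid_cell_mean_on_cube sum_divide_distrib)
  then show ?thesis
    by (simp add: strat_estimate_def sum_subtractf diff_divide_distrib)
qed

lemma char_normalized_strat_estimate:
  assumes \<sigma>: "\<sigma>2 > 0" and m: "m > 0"
  shows "cmod (char (distr (strat_sample m) borel
            (\<lambda>U. (strat_estimate f m U - integral unit_cube f) /
                 (sqrt \<sigma>2 * real (m ^ CARD('n)) powr (- 1/2 - 1 / real CARD('n))))) t
          - complex_of_real (exp (- (t\<^sup>2 / 2) * ((real m)\<^sup>2 / real m ^ CARD('n) *
               (\<Sum>k\<in>grid_index m. grid_cell_var (on_cube f) m k) / \<sigma>2))))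
    \<le> real m ^ CARD('n) *
       (\<bar>t\<bar> ^ 3 / 6 * (grad_bound * real CARD('n) / sqrt \<sigma>2 / sqrt (real m ^ CARD('n))) ^ 3 +
        (t\<^sup>2 / 2)\<^sup>2 * (grad_bound * real CARD('n) / sqrt \<sigma>2 / sqrt (real m ^ CARD('n))) ^ 4)"
proof -
  let ?N = "real m ^ CARD('n)" and ?K = "grid_index m :: ('n \<Rightarrow> nat) set"
  let ?U = "\<lambda>k. uniform_measure lborel (grid_cell m k)"
  let ?B = "grad_bound * real CARD('n) / sqrt \<sigma>2 / sqrt ?N"
  \<comment> \<open>s is n times the normaliser sigma n^(-1/2-1/d).\<close>
  define s where "s = sqrt \<sigma>2 * sqrt ?N / real m"
  define X where "X k x = (on_cube f x - grid_cell_mean (on_cube f) m k) / s" for k x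
  have N: "?N > 0" and s: "s > 0"
    using m \<sigma> by (simp_all add: s_def)
  define D where "D = sqrt \<sigma>2 * real (m ^ CARD('n)) powr (- 1/2 - 1 / real CARD('n))"
  have "D = s / ?N"
    unfolding D_def s_def by (subst powr_neg_half_minus_inverse_card[OF m]) simp_all
  then have sum_X: "(strat_estimate f m U - integral unit_cube f) / D = (\<Sum>k\<in>?K. X k (U k))" for U
    using N s by (simp add: strat_estimate_minus_integral[OF m] X_def flip: sum_divide_distrib)
  have "(\<Sum>k\<in>?K. \<integral>x. (X k x)\<^sup>2 \<partial>?U k) = (\<Sum>k\<in>?K. grid_cell_var (on_cube f) m k) / s\<^sup>2"
    by (simp add: X_def grid_cell_var_def power_divide sum_divide_distrib)
  also have "\<dots> = (real m)\<^sup>2 / ?N * (\<Sum>k\<in>?K. grid_cell_var (on_cube f) m k) / \<sigma>2"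
    using N \<sigma> m by (simp add: s_def power_divide power_mult_distrib mult_ac)
  finally have sum_var: "(\<Sum>k\<in>?K. \<integral>x. (X k x)\<^sup>2 \<partial>?U k) =
      (real m)\<^sup>2 / ?N * (\<Sum>k\<in>?K. grid_cell_var (on_cube f) m k) / \<sigma>2" .
  have "cmod (char (distr (Pi\<^sub>M ?K ?U) borel (\<lambda>U. \<Sum>k\<in>?K. X k (U k))) t -
      complex_of_real (exp (- (t\<^sup>2 / 2) * (\<Sum>k\<in>?K. \<integral>x. (X k x)\<^sup>2 \<partial>?U k))))
      \<le> real (card ?K) * (\<bar>t\<bar> ^ 3 * ?B ^ 3 / 6 + (t\<^sup>2 / 2)\<^sup>2 * ?B ^ 4)"
  proof (rule char_PiM_sum_bounded_centered[OF finite_grid_index])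
    fix k :: "'n \<Rightarrow> nat"
    show "prob_space (?U k)"
      using m by (rule prob_space_grid_cell)
    then interpret prob_space "?U k" .
    show "X k \<in> borel_measurable (?U k)"
      unfolding X_def borel_measurable_uniform_measure by measurable
    assume k: "k \<in> ?K"
    have "integrable (?U k) (on_cube f)"
      using m borel_measurable_on_cube continuous_on_grid_cell_on_cube[OF k] by (rule integrable_grid_cell)
    moreover have "prob UNIV = 1"
      using prob_space by simp
    ultimately show "expectation (X k) = 0"
      unfolding X_def grid_cell_mean_def by simp
    show "AE x in ?U k. \<bar>X k x\<bar> \<le> ?B"
      using AE_grid_cell
    proof eventually_elim
      case (elim x)
      have "\<bar>X k x\<bar> = \<bar>on_cube f x - grid_cell_mean (on_cube f) m k\<bar> / s"
        unfolding X_def using s by simp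
      also have "\<dots> \<le> grad_bound * real CARD('n) / real m / s"
        using s abs_on_cube_minus_grid_cell_mean[OF m k elim] by (intro divide_right_mono) auto
      also have "\<dots> = ?B"
        using m by (simp add: s_def)
      finally show ?case .
    qed
  qed
  then show ?thesis
    unfolding D_def[symmetric] strat_sample_def[symmetric] sum_X[symmetric] sum_var card_grid_index
    by (simp add: mult_ac)
qed

lemma char_normalized_strat_estimate_tendsto:
  assumes \<sigma>2: "\<sigma>2 = 1/12 * integral unit_cube (\<lambda>x. (norm (gradf x))\<^sup>2)" and pos: "\<sigma>2 > 0"
  shows "(\<lambda>m. char (distr (strat_sample m) borel
            (\<lambda>U. (strat_estimate f m U - integral unit_cube f) /
                 (sqrt \<sigma>2 * real (m ^ CARD('n)) powr (- 1/2 - 1 / real CARD('n))))) t)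
         \<longlonglongrightarrow> char std_normal_distribution t"
proof -
  let ?N = "\<lambda>m::nat. real m ^ CARD('n)" and ?C = "grad_bound * real CARD('n) / sqrt \<sigma>2"
  let ?\<phi> = "\<lambda>m. char (distr (strat_sample m) borel
            (\<lambda>U. (strat_estimate f m U - integral unit_cube f) /
                 (sqrt \<sigma>2 * real (m ^ CARD('n)) powr (- 1/2 - 1 / real CARD('n))))) t"
  define V where "V m = (real m)\<^sup>2 / ?N m * (\<Sum>k\<in>grid_index m. grid_cell_var (on_cube f) m k) / \<sigma>2"
    for m :: nat
  have "(\<lambda>m. ?\<phi> m - exp (- (t\<^sup>2 / 2) * V m)) \<longlonglongrightarrow> 0"
  proof (rule Lim_null_comparison)
    show "\<forall>\<^sub>F m in sequentially. norm (?\<phi> m - exp (- (t\<^sup>2 / 2) * V m))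
        \<le> ?N m * (\<bar>t\<bar> ^ 3 / 6 * (?C / sqrt (?N m)) ^ 3 + (t\<^sup>2 / 2)\<^sup>2 * (?C / sqrt (?N m)) ^ 4)"
      using eventually_gt_at_top[of "0::nat"]
      by eventually_elim (use char_normalized_strat_estimate[OF pos] in \<open>simp add: V_def\<close>)
    show "(\<lambda>m. ?N m * (\<bar>t\<bar> ^ 3 / 6 * (?C / sqrt (?N m)) ^ 3 + (t\<^sup>2 / 2)\<^sup>2 * (?C / sqrt (?N m)) ^ 4))
        \<longlonglongrightarrow> 0"
      by (intro Lyapunov_bound_tendsto_zero filterlim_pow_at_top filterlim_real_sequentially) simp
  qed
  moreover have "V \<longlonglongrightarrow> \<sigma>2 / \<sigma>2"
    unfolding V_def \<sigma>2 using pos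
    by (intro tendsto_divide grid_cell_var_sum_tendsto tendsto_const) (simp add: \<sigma>2)
  then have "(\<lambda>m. complex_of_real (exp (- (t\<^sup>2 / 2) * V m))) \<longlonglongrightarrow> complex_of_real (exp (- (t\<^sup>2 / 2)))"
    using pos by (auto intro!: tendsto_eq_intros)
  ultimately have "(\<lambda>m. (?\<phi> m - exp (- (t\<^sup>2 / 2) * V m)) + exp (- (t\<^sup>2 / 2) * V m))
      \<longlonglongrightarrow> 0 + complex_of_real (exp (- (t\<^sup>2 / 2)))"
    by (rule tendsto_add)
  then show ?thesis
    by (simp add: char_std_normal_distribution)
qed

end

theorem theorem1:
  fixes f :: "real ^ 'n::finite \<Rightarrow> real"
    and gradf :: "real ^ 'n \<Rightarrow> real ^ 'n"
    and \<mu> \<sigma>2 :: real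
  assumes deriv: "\<And>x. x \<in> unit_cube \<Longrightarrow>
                     (f has_derivative (\<lambda>h. gradf x \<bullet> h)) (at x within unit_cube)"
    and cont_grad: "continuous_on unit_cube gradf"
    and mu_def: "\<mu> = integral unit_cube f"
    and sigma2_def: "\<sigma>2 = (1/12) * integral unit_cube (\<lambda>x. (norm (gradf x))\<^sup>2)"
    and pos: "\<sigma>2 > 0"
  shows "weak_conv_m
           (\<lambda>m. distr (strat_sample m) borel
              (\<lambda>U. (strat_estimate f m U - \<mu>) /
                   (sqrt \<sigma>2 * real (m ^ CARD('n)) powr (- 1/2 - 1 / real CARD('n)))))
           std_normal_distribution"
proof (rule levy_continuity)
  interpret C1_unit_cube f gradf
    using deriv cont_grad by unfold_locales
  show "real_distribution (distr (strat_sample m) borel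
      (\<lambda>U. (strat_estimate f m U - \<mu>) / (sqrt \<sigma>2 * real (m ^ CARD('n)) powr (- 1/2 - 1 / real CARD('n)))))"
    for m
    using prob_space_strat_sample by (rule prob_space.real_distribution_distr) simp
  show "real_distribution std_normal_distribution"
    by (rule real_dist_normal_dist)
  show "(\<lambda>m. char (distr (strat_sample m) borel
      (\<lambda>U. (strat_estimate f m U - \<mu>) / (sqrt \<sigma>2 * real (m ^ CARD('n)) powr (- 1/2 - 1 / real CARD('n))))) t)
      \<longlonglongrightarrow> char std_normal_distribution t" for t
    unfolding mu_def using sigma2_def pos by (rule char_normalized_strat_estimate_tendsto)
qed

end
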